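(* Let $r \geqslant 5$ be a prime and let $\mathcal{H}_r = \{ (q,d) : r =\frac{q^d-1}{q-1},\ q \text{ a prime power},\ d \geqslant 2 \text{ an integer} \}$. Then $|\mathcal{H}_r| < \log_2 r$. *)

theory Defs
  imports "HOL-Number_Theory.Number_Theory"
begin

definition H :: "nat \<Rightarrow> (nat \<times> nat) set" where
  "H r = {(q, d). primepow q \<and> d \<ge> 2 \<and> real r = (real q ^ d - 1) / (real q - 1)}"

end

theory Submission
  imports Defs
begin

text \<open>Every (q, d) in H r has r = 1 + q + ... + q^(d-1). Since this sum is strictly increasing in
  q, the exponent d determines q, so H r injects into its set of exponents. Since q \<ge> 2 gives
  r \<ge> 2^d - 1, each exponent satisfies 2 \<le> d \<le> log 2 (r + 1), leaving at most log 2 (r + 1) - 1 = log 2 ((r + 1) / 2)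
  exponents, which is less than log 2 r as soon as r > 1.\<close>

lemma H_memD:
  assumes "(q, d) \<in> H r"
  shows "2 \<le> q" and "2 \<le> d" and "r = (\<Sum>i<d. q ^ i)"
proof -
  from assms have "primepow q" and "2 \<le> d" and r: "real r = (real q ^ d - 1) / (real q - 1)"
    unfolding H_def by auto
  then show q: "2 \<le> q" and "2 \<le> d"
    using primepow_gt_Suc_0[of q] by auto
  from r q have "real r = (\<Sum>i<d. real q ^ i)"
    by (simp add: geometric_sum)
  then have "real r = real (\<Sum>i<d. q ^ i)"
    by simp
  then show "r = (\<Sum>i<d. q ^ i)"
    by (simp only: of_nat_eq_iff)
qed

lemma sum_powers_strict_mono:
  fixes a b :: nat
  assumes "a < b" and "2 \<le> d"
  shows "(\<Sum>i<d. a ^ i) < (\<Sum>i<d. b ^ i)"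
proof (rule sum_strict_mono_ex1)
  show "\<forall>i\<in>{..<d}. a ^ i \<le> b ^ i"
    using assms by (simp add: power_mono)
  show "\<exists>i\<in>{..<d}. a ^ i < b ^ i"
    using assms by (intro bexI[of _ 1]) auto
qed simp

lemma inj_on_snd_H: "inj_on snd (H r)"
proof (rule inj_onI)
  fix x y
  assume "x \<in> H r" "y \<in> H r" "snd x = snd y"
  then obtain q q' d where x: "x = (q, d)" and y: "y = (q', d)"
    and qd: "(q, d) \<in> H r" and q'd: "(q', d) \<in> H r"
    by (cases x, cases y) auto
  have "\<not> q < q'" and "\<not> q' < q"
    using sum_powers_strict_mono H_memD[OF qd] H_memD[OF q'd] by (metis less_irrefl)+
  with x y show "x = y" by simp
qed

lemma two_power_le_Suc_H:
  assumes "(q, d) \<in> H r"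
  shows "2 ^ d \<le> r + 1"
proof -
  have "(\<Sum>i<d. (2::nat) ^ i) = 2 ^ d - 1"
    by (induction d) auto
  moreover have "(\<Sum>i<d. (2::nat) ^ i) \<le> (\<Sum>i<d. q ^ i)"
    using H_memD(1)[OF assms] by (intro sum_mono power_mono) auto
  ultimately show ?thesis
    using H_memD(3)[OF assms] by (simp add: Nat.le_diff_conv2)
qed

lemma snd_H_subset: "snd ` H r \<subseteq> {2..nat \<lfloor>log 2 (real r + 1)\<rfloor>}"
proof
  fix d
  assume "d \<in> snd ` H r"
  then obtain q where qd: "(q, d) \<in> H r" by force
  have "real (2 ^ d) \<le> real (r + 1)"
    using two_power_le_Suc_H[OF qd] by (simp only: of_nat_le_iff)
  then have "2 powr real d \<le> real r + 1"
    by (simp add: powr_realpow)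
  then have "real d \<le> log 2 (real r + 1)"
    by (simp add: le_log_iff)
  with H_memD(2)[OF qd] show "d \<in> {2..nat \<lfloor>log 2 (real r + 1)\<rfloor>}"
    by (simp add: le_nat_floor)
qed

lemma card_H_le:
  assumes "1 \<le> r"
  shows "real (card (H r)) \<le> log 2 ((real r + 1) / 2)"
proof (cases "H r = {}")
  case True
  then show ?thesis using assms by simp
next
  case False
  define D where "D = nat \<lfloor>log 2 (real r + 1)\<rfloor>"
  have "card (H r) = card (snd ` H r)"
    by (simp add: card_image inj_on_snd_H)
  also have "\<dots> \<le> card {2..D}"
    using snd_H_subset unfolding D_def by (intro card_mono) auto
  finally have "card (H r) \<le> D - 1" by simp
  moreover have "2 \<le> D"
    using False snd_H_subset unfolding D_def by fastforce
  moreover have "real D \<le> log 2 (real r + 1)"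
    using \<open>2 \<le> D\<close> unfolding D_def by linarith
  ultimately have "real (card (H r)) \<le> log 2 (real r + 1) - 1" by linarith
  then show ?thesis by (simp add: log_divide)
qed

theorem lemma3p9:
  fixes r :: nat
  assumes "prime r" and "r \<ge> 5"
  shows "real (card (H r)) < log 2 (real r)"
proof -
  have "log 2 ((real r + 1) / 2) < log 2 (real r)"
    using assms(2) by simp
  moreover have "real (card (H r)) \<le> log 2 ((real r + 1) / 2)"
    using assms(2) by (intro card_H_le) simp
  ultimately show ?thesis by linarith
qed

end
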